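(* Let $A,B\subset\mathbb{R}^n$ be set-germs at $0$ with $0\in\overline{A}\cap\overline{B}$, and let $h:(\mathbb{R}^n,0)\to(\mathbb{R}^n,0)$ be a bi-Lipschitz homeomorphism (germ). Suppose there are $d>1$ and $C>0$ such that $A\subset ST_d(B;C)$ as germs at $0$. Then $D(h(A))\subset D(h(B))$. Moreover, $D(ST_d(h(A);C'))\subset D(h(B))$ for any $C'>0$.
   Context: A bi-Lipschitz homeomorphism germ is a homeomorphism between neighbourhoods of $0$ fixing $0$ with $K_1|x-y|\le|h(x)-h(y)|\le K_2|x-y|$ for some $0<K_1\le K_2$ near $0$. Sea-tangle neighbourhood: $ST_d(X;C)=\{x\in\mathbb{R}^n : \mathrm{dist}(x,X)\le C|x|^d\}$. "As germs at $0$" means after intersecting with some neighbourhood of $0$. Direction set: $D(X)=\{a\in S^{n-1} : \exists\, \{x_i\}\subset X\setminus\{0\},\ x_i\to 0,\ x_i/\|x_i\|\to a\}$. *)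

theory Defs
  imports "HOL-Analysis.Analysis"
begin

definition sea_tangle :: "real \<Rightarrow> 'a::euclidean_space set \<Rightarrow> real \<Rightarrow> 'a set" where
  "sea_tangle d X C = {x. infdist x X \<le> C * norm x powr d}"

definition direction_set :: "'a::euclidean_space set \<Rightarrow> 'a set" where
  "direction_set X = {a. norm a = 1 \<and>
     (\<exists>x::nat \<Rightarrow> 'a. (\<forall>i. x i \<in> X - {0}) \<and> x \<longlonglongrightarrow> 0 \<and>
        (\<lambda>i. x i /\<^sub>R norm (x i)) \<longlonglongrightarrow> a)}"

definition bilipschitz_homeo_germ :: "('a::euclidean_space \<Rightarrow> 'a) \<Rightarrow> 'a set \<Rightarrow> bool" where
  "bilipschitz_homeo_germ h U \<longleftrightarrow>
     open U \<and> 0 \<in> U \<and> h 0 = 0 \<and> open (h ` U) \<and>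
     (\<exists>g. homeomorphism U (h ` U) h g) \<and>
     (\<exists>K1 K2. 0 < K1 \<and> K1 \<le> K2 \<and>
        (\<forall>x\<in>U. \<forall>y\<in>U. K1 * dist x y \<le> dist (h x) (h y) \<and> dist (h x) (h y) \<le> K2 * dist x y))"

end

theory Submission
  imports Defs
begin

text \<open>
  Call null sequences \<open>p\<close>, \<open>q\<close> relatively close if \<open>|q i - p i| = o(|p i|)\<close>; such sequences
  have the same limiting directions. Every point \<open>p\<close> of \<open>ST\<^sub>d(X;C)\<close> lies within
  \<open>(C + 1) |p|\<^sup>d = o(|p|)\<close> of \<open>X\<close>, since \<open>d > 1\<close>, and a bi-Lipschitz \<open>h\<close> with \<open>h 0 = 0\<close> keeps
  relatively close sequences relatively close, because \<open>|h x| \<ge> K\<^sub>1 |x|\<close>. Hence a direction of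
  \<open>h(A)\<close>, realised by \<open>h(x i)\<close> with \<open>x i \<in> A\<close>, is also realised by \<open>h(y i)\<close> for nearby
  \<open>y i \<in> B\<close>; and \<open>D(ST\<^sub>d(h(A);C')) \<subseteq> D(h(A))\<close> by the sea-tangle estimate alone.
\<close>

lemma infdist_lessE:
  fixes x :: "'a::metric_space"
  assumes "A \<noteq> {}" "infdist x A < t"
  obtains a where "a \<in> A" "dist x a < t"
proof -
  have "bdd_below ((\<lambda>a. dist x a) ` A)" by (rule bdd_belowI[of _ 0]) auto
  with assms show thesis
    using that by (auto simp: infdist_notempty cINF_less_iff)
qed

lemma norm_diff_normalized_le:
  fixes p q :: "'a::real_normed_vector"
  assumes "p \<noteq> 0"
  shows "norm (q /\<^sub>R norm q - p /\<^sub>R norm p) \<le> 2 * (norm (q - p) / norm p)"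
proof (cases "q = 0")
  case True
  then show ?thesis using assms by simp
next
  case False
  have np: "norm p > 0" and nq: "norm q > 0" using assms False by simp_all
  have "q /\<^sub>R norm q - q /\<^sub>R norm p = (1 / norm q - 1 / norm p) *\<^sub>R q"
    by (simp add: scaleR_diff_left divide_inverse)
  then have "norm (q /\<^sub>R norm q - q /\<^sub>R norm p) = \<bar>1 / norm q - 1 / norm p\<bar> * norm q"
    by simp
  also have "\<dots> = \<bar>norm p - norm q\<bar> / norm p"
    using np nq by (simp add: field_simps abs_div)
  also have "\<dots> \<le> norm (q - p) / norm p"
    using np norm_triangle_ineq3[of p q] by (intro divide_right_mono) (simp_all add: norm_minus_commute)
  finally have "norm (q /\<^sub>R norm q - q /\<^sub>R norm p) \<le> norm (q - p) / norm p" .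
  moreover have "norm ((q - p) /\<^sub>R norm p) = norm (q - p) / norm p"
    using np by (simp add: divide_inverse mult.commute)
  moreover have "q /\<^sub>R norm q - p /\<^sub>R norm p = (q /\<^sub>R norm q - q /\<^sub>R norm p) + (q - p) /\<^sub>R norm p"
    by (simp add: algebra_simps)
  then have "norm (q /\<^sub>R norm q - p /\<^sub>R norm p)
      \<le> norm (q /\<^sub>R norm q - q /\<^sub>R norm p) + norm ((q - p) /\<^sub>R norm p)"
    by (metis norm_triangle_ineq)
  ultimately show ?thesis by linarith
qed

lemma relatively_close_tendsto_zero:
  fixes p q :: "nat \<Rightarrow> 'a::real_normed_vector"
  assumes p0: "\<And>i. p i \<noteq> 0" and p: "p \<longlonglongrightarrow> 0"
    and close: "(\<lambda>i. norm (q i - p i) / norm (p i)) \<longlonglongrightarrow> 0"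
  shows "q \<longlonglongrightarrow> 0" "\<forall>\<^sub>F i in sequentially. q i \<noteq> 0"
proof -
  have "(\<lambda>i. q i - p i) \<longlonglongrightarrow> 0"
  proof (rule Lim_null_comparison)
    show "\<forall>\<^sub>F i in sequentially. norm (q i - p i) \<le> norm (q i - p i) / norm (p i) * norm (p i)"
      using p0 by simp
    show "(\<lambda>i. norm (q i - p i) / norm (p i) * norm (p i)) \<longlonglongrightarrow> 0"
      using tendsto_mult[OF close tendsto_norm[OF p]] by simp
  qed
  from tendsto_add[OF this p] show "q \<longlonglongrightarrow> 0" by simp
  have "\<forall>\<^sub>F i in sequentially. norm (q i - p i) / norm (p i) < 1"
    using order_tendstoD(2)[OF close] by simp
  then show "\<forall>\<^sub>F i in sequentially. q i \<noteq> 0"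
    by eventually_elim (use p0 in auto)
qed

lemma relatively_close_same_direction:
  fixes p q :: "nat \<Rightarrow> 'a::real_normed_vector"
  assumes p0: "\<And>i. p i \<noteq> 0" and dir: "(\<lambda>i. p i /\<^sub>R norm (p i)) \<longlonglongrightarrow> a"
    and close: "(\<lambda>i. norm (q i - p i) / norm (p i)) \<longlonglongrightarrow> 0"
  shows "(\<lambda>i. q i /\<^sub>R norm (q i)) \<longlonglongrightarrow> a"
proof -
  have "(\<lambda>i. q i /\<^sub>R norm (q i) - p i /\<^sub>R norm (p i)) \<longlonglongrightarrow> 0"
  proof (rule Lim_null_comparison)
    show "\<forall>\<^sub>F i in sequentially.
            norm (q i /\<^sub>R norm (q i) - p i /\<^sub>R norm (p i)) \<le> 2 * (norm (q i - p i) / norm (p i))"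
      using norm_diff_normalized_le[OF p0] by simp
    show "(\<lambda>i. 2 * (norm (q i - p i) / norm (p i))) \<longlonglongrightarrow> 0"
      using tendsto_mult_right_zero[OF close] .
  qed
  from tendsto_add[OF this dir] show ?thesis by simp
qed

lemma relatively_close_if_powr_bound:
  fixes p q :: "nat \<Rightarrow> 'a::real_normed_vector"
  assumes p0: "\<And>i. p i \<noteq> 0" and p: "p \<longlonglongrightarrow> 0" and "d > 1"
    and bound: "\<forall>\<^sub>F i in sequentially. norm (q i - p i) \<le> c * norm (p i) powr d"
  shows "(\<lambda>i. norm (q i - p i) / norm (p i)) \<longlonglongrightarrow> 0"
proof (rule Lim_null_comparison)
  show "\<forall>\<^sub>F i in sequentially. norm (norm (q i - p i) / norm (p i)) \<le> c * norm (p i) powr (d - 1)"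
    using bound
  proof eventually_elim
    case (elim i)
    have np: "norm (p i) > 0" using p0 by simp
    then have "norm (p i) powr (d - 1) = norm (p i) powr d / norm (p i)"
      by (simp add: powr_diff)
    with elim np show ?case by (simp add: divide_right_mono)
  qed
  have "(\<lambda>i. norm (p i) powr (d - 1)) \<longlonglongrightarrow> 0"
    by (rule tendsto_zero_powrI[OF tendsto_norm_zero[OF p] tendsto_const]) (use \<open>d > 1\<close> in auto)
  then show "(\<lambda>i. c * norm (p i) powr (d - 1)) \<longlonglongrightarrow> 0"
    by (rule tendsto_mult_right_zero)
qed

lemma direction_setE:
  assumes "a \<in> direction_set X"
  obtains x where "\<And>i. x i \<in> X - {0}" "x \<longlonglongrightarrow> 0"
    "(\<lambda>i. x i /\<^sub>R norm (x i)) \<longlonglongrightarrow> a" "norm a = 1"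
  using assms that unfolding direction_set_def by blast

lemma direction_setI:
  fixes q :: "nat \<Rightarrow> 'a::euclidean_space"
  assumes "norm a = 1" "\<forall>\<^sub>F i in sequentially. q i \<in> X \<and> q i \<noteq> 0"
    "q \<longlonglongrightarrow> 0" "(\<lambda>i. q i /\<^sub>R norm (q i)) \<longlonglongrightarrow> a"
  shows "a \<in> direction_set X"
proof -
  obtain N where N: "\<And>i. i \<ge> N \<Longrightarrow> q i \<in> X \<and> q i \<noteq> 0"
    using assms(2) unfolding eventually_sequentially by blast
  have "\<forall>i. q (i + N) \<in> X - {0}" using N by auto
  moreover have "(\<lambda>i. q (i + N)) \<longlonglongrightarrow> 0"
    using LIMSEQ_ignore_initial_segment[OF assms(3)] .
  moreover have "(\<lambda>i. q (i + N) /\<^sub>R norm (q (i + N))) \<longlonglongrightarrow> a"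
    using LIMSEQ_ignore_initial_segment[OF assms(4)] .
  ultimately show ?thesis
    unfolding direction_set_def mem_Collect_eq using assms(1)
    by (intro conjI exI[of _ "\<lambda>i. q (i + N)"]) auto
qed

lemma direction_set_subset_if_relatively_close:
  fixes X Y :: "'a::euclidean_space set"
  assumes close: "\<And>p. (\<And>i. p i \<in> X - {0}) \<Longrightarrow> p \<longlonglongrightarrow> 0 \<Longrightarrow>
    \<exists>q. (\<forall>\<^sub>F i in sequentially. q i \<in> Y) \<and> (\<lambda>i. norm (q i - p i) / norm (p i)) \<longlonglongrightarrow> 0"
  shows "direction_set X \<subseteq> direction_set Y"
proof
  fix a assume "a \<in> direction_set X"
  then obtain p where p: "\<And>i. p i \<in> X - {0}" "p \<longlonglongrightarrow> 0"
    "(\<lambda>i. p i /\<^sub>R norm (p i)) \<longlonglongrightarrow> a" "norm a = 1"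
    by (elim direction_setE) blast
  then have p0: "p i \<noteq> 0" for i by blast
  obtain q where qY: "\<forall>\<^sub>F i in sequentially. q i \<in> Y"
    and q: "(\<lambda>i. norm (q i - p i) / norm (p i)) \<longlonglongrightarrow> 0"
    using close[OF p(1,2)] by blast
  note q_null = relatively_close_tendsto_zero[OF p0 p(2) q]
  show "a \<in> direction_set Y"
  proof (rule direction_setI[OF p(4) _ q_null(1)])
    show "\<forall>\<^sub>F i in sequentially. q i \<in> Y \<and> q i \<noteq> 0"
      using qY q_null(2) by eventually_elim simp
    show "(\<lambda>i. q i /\<^sub>R norm (q i)) \<longlonglongrightarrow> a"
      using relatively_close_same_direction[OF p0 p(3) q] .
  qed
qed

lemma sea_tangle_relatively_close_seq:
  fixes p :: "nat \<Rightarrow> 'a::euclidean_space"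
  assumes "X \<noteq> {}" "d > 1" and p0: "\<And>i. p i \<noteq> 0" and p: "p \<longlonglongrightarrow> 0"
    and ST: "\<forall>\<^sub>F i in sequentially. p i \<in> sea_tangle d X C"
  obtains q where "\<And>i. q i \<in> X" "(\<lambda>i. norm (q i - p i) / norm (p i)) \<longlonglongrightarrow> 0"
proof -
  \<comment> \<open>\<open>infdist\<close> need not be attained; the slack \<open>|p i|\<^sup>d\<close> is itself \<open>o(|p i|)\<close>.\<close>
  have "\<exists>y. y \<in> X \<and> dist (p i) y < infdist (p i) X + norm (p i) powr d" for i
    using infdist_lessE[OF \<open>X \<noteq> {}\<close>, of "p i" "infdist (p i) X + norm (p i) powr d"] p0[of i]
    by force
  then obtain q where q: "\<And>i. q i \<in> X \<and> dist (p i) (q i) < infdist (p i) X + norm (p i) powr d"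
    by metis
  have "\<forall>\<^sub>F i in sequentially. norm (q i - p i) \<le> (C + 1) * norm (p i) powr d"
    using ST
  proof eventually_elim
    case (elim i)
    then have "infdist (p i) X \<le> C * norm (p i) powr d" unfolding sea_tangle_def by simp
    with q[of i] show ?case by (simp add: dist_norm norm_minus_commute algebra_simps)
  qed
  with relatively_close_if_powr_bound[OF p0 p \<open>d > 1\<close>] q that show thesis by blast
qed

lemma direction_set_sea_tangle_subset:
  fixes X :: "'a::euclidean_space set"
  assumes "X \<noteq> {}" "d > 1"
  shows "direction_set (sea_tangle d X C) \<subseteq> direction_set X"
proof (rule direction_set_subset_if_relatively_close)
  fix p assume p: "\<And>i. p i \<in> sea_tangle d X C - {0}" "p \<longlonglongrightarrow> 0"
  then have "p i \<noteq> 0" for i by blast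
  moreover have "\<forall>\<^sub>F i in sequentially. p i \<in> sea_tangle d X C" using p(1) by simp
  ultimately obtain q where q: "\<And>i. q i \<in> X" "(\<lambda>i. norm (q i - p i) / norm (p i)) \<longlonglongrightarrow> 0"
    using sea_tangle_relatively_close_seq[OF assms _ p(2)] by blast
  show "\<exists>q. (\<forall>\<^sub>F i in sequentially. q i \<in> X) \<and> (\<lambda>i. norm (q i - p i) / norm (p i)) \<longlonglongrightarrow> 0"
    using q by (intro exI[of _ q]) simp
qed

lemma relatively_close_lipschitz_image:
  fixes h :: "'a::real_normed_vector \<Rightarrow> 'b::real_normed_vector"
  assumes upper: "\<And>x y. x \<in> U \<Longrightarrow> y \<in> U \<Longrightarrow> dist (h x) (h y) \<le> K2 * dist x y"
    and lower: "\<And>x. x \<in> U \<Longrightarrow> K1 * norm x \<le> norm (h x)" and "K1 > 0"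
    and x: "\<And>i. x i \<in> U - {0}" and y: "\<forall>\<^sub>F i in sequentially. y i \<in> U"
    and close: "(\<lambda>i. norm (y i - x i) / norm (x i)) \<longlonglongrightarrow> 0"
  shows "(\<lambda>i. norm (h (y i) - h (x i)) / norm (h (x i))) \<longlonglongrightarrow> 0"
proof (rule Lim_null_comparison)
  show "\<forall>\<^sub>F i in sequentially.
          norm (norm (h (y i) - h (x i)) / norm (h (x i))) \<le> K2 / K1 * (norm (y i - x i) / norm (x i))"
    using y
  proof eventually_elim
    case (elim i)
    have Lip: "norm (h (y i) - h (x i)) \<le> K2 * norm (y i - x i)"
      using upper[OF elim] x[of i] by (simp add: dist_norm)
    have "0 < K1 * norm (x i)" using \<open>K1 > 0\<close> x[of i] by simp
    then have "norm (h (y i) - h (x i)) / norm (h (x i)) \<le> K2 * norm (y i - x i) / (K1 * norm (x i))"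
      using Lip lower[of "x i"] x[of i] order_trans[OF norm_ge_zero Lip] by (intro frac_le) auto
    then show ?case by simp
  qed
  show "(\<lambda>i. K2 / K1 * (norm (y i - x i) / norm (x i))) \<longlonglongrightarrow> 0"
    using tendsto_mult_right_zero[OF close] .
qed

lemma bilipschitz_homeo_germD:
  assumes "bilipschitz_homeo_germ h U"
  shows "open U" "0 \<in> U" "h 0 = 0"
  using assms unfolding bilipschitz_homeo_germ_def by auto

lemma bilipschitz_homeo_germ_boundsE:
  assumes "bilipschitz_homeo_germ h U"
  obtains K1 K2 where "K1 > 0"
    "\<And>x y. x \<in> U \<Longrightarrow> y \<in> U \<Longrightarrow> dist (h x) (h y) \<le> K2 * dist x y"
    "\<And>x. x \<in> U \<Longrightarrow> K1 * norm x \<le> norm (h x)"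
proof -
  obtain K1 K2 where K: "K1 > 0"
    "\<forall>x\<in>U. \<forall>y\<in>U. K1 * dist x y \<le> dist (h x) (h y) \<and> dist (h x) (h y) \<le> K2 * dist x y"
    using assms unfolding bilipschitz_homeo_germ_def by blast
  have "K1 * norm x \<le> norm (h x)" if "x \<in> U" for x
    using K(2) that bilipschitz_homeo_germD[OF assms] by (metis dist_0_norm diff_zero dist_norm)
  with K that show thesis by blast
qed

lemma direction_set_bilipschitz_image_subset:
  fixes A B U :: "'a::euclidean_space set"
  assumes h: "bilipschitz_homeo_germ h U" and "B \<noteq> {}" "d > 1"
    and "e > 0" and A: "A \<inter> ball 0 e \<subseteq> sea_tangle d B C"
  shows "direction_set (h ` (A \<inter> U)) \<subseteq> direction_set (h ` (B \<inter> U))"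
proof (rule direction_set_subset_if_relatively_close)
  note U = bilipschitz_homeo_germD[OF h]
  obtain K1 K2 where "K1 > 0"
    and upper: "\<And>x y. x \<in> U \<Longrightarrow> y \<in> U \<Longrightarrow> dist (h x) (h y) \<le> K2 * dist x y"
    and lower: "\<And>x. x \<in> U \<Longrightarrow> K1 * norm x \<le> norm (h x)"
    by (rule bilipschitz_homeo_germ_boundsE[OF h]) (rule that)
  fix p assume p: "\<And>i. p i \<in> h ` (A \<inter> U) - {0}" "p \<longlonglongrightarrow> 0"
  define x where "x i = inv_into (A \<inter> U) h (p i)" for i
  have x: "x i \<in> A \<inter> U" "h (x i) = p i" for i
    using inv_into_into[of "p i" h "A \<inter> U"] f_inv_into_f[of "p i" h "A \<inter> U"] p(1)[of i]
    unfolding x_def by blast+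
  have x0: "x i \<noteq> 0" for i
    using x(2)[of i] p(1)[of i] U(3) by auto
  have "x \<longlonglongrightarrow> 0"
  proof (rule Lim_null_comparison)
    have "norm (x i) \<le> norm (p i) / K1" for i
      using lower[of "x i"] x[of i] \<open>K1 > 0\<close> by (simp add: field_simps)
    then show "\<forall>\<^sub>F i in sequentially. norm (x i) \<le> norm (p i) / K1" by simp
    show "(\<lambda>i. norm (p i) / K1) \<longlonglongrightarrow> 0"
      using tendsto_divide_zero[OF tendsto_norm_zero[OF p(2)]] .
  qed
  moreover have "\<forall>\<^sub>F i in sequentially. x i \<in> ball 0 e"
    using \<open>x \<longlonglongrightarrow> 0\<close> \<open>e > 0\<close> by (intro topological_tendstoD) auto
  then have "\<forall>\<^sub>F i in sequentially. x i \<in> sea_tangle d B C"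
    by eventually_elim (use A x(1) in blast)
  ultimately obtain y where y: "\<And>i. y i \<in> B" and xy: "(\<lambda>i. norm (y i - x i) / norm (x i)) \<longlonglongrightarrow> 0"
    using sea_tangle_relatively_close_seq[where p = x, OF \<open>B \<noteq> {}\<close> \<open>d > 1\<close> x0] by blast
  have "y \<longlonglongrightarrow> 0"
    using relatively_close_tendsto_zero(1)[OF x0 \<open>x \<longlonglongrightarrow> 0\<close> xy] .
  then have yU: "\<forall>\<^sub>F i in sequentially. y i \<in> U"
    using topological_tendstoD U(1,2) by blast
  have "(\<lambda>i. norm (h (y i) - h (x i)) / norm (h (x i))) \<longlonglongrightarrow> 0"
    by (rule relatively_close_lipschitz_image[OF upper lower \<open>K1 > 0\<close> _ yU xy]) (use x(1) x0 in auto)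
  then have hy_close: "(\<lambda>i. norm (h (y i) - p i) / norm (p i)) \<longlonglongrightarrow> 0"
    by (simp only: x(2))
  have hy_in: "\<forall>\<^sub>F i in sequentially. h (y i) \<in> h ` (B \<inter> U)"
    using yU by eventually_elim (use y in blast)
  show "\<exists>q. (\<forall>\<^sub>F i in sequentially. q i \<in> h ` (B \<inter> U)) \<and>
      (\<lambda>i. norm (q i - p i) / norm (p i)) \<longlonglongrightarrow> 0"
    by (intro exI[of _ "\<lambda>i. h (y i)"] conjI hy_in hy_close)
qed

theorem lemma4p9:
  fixes A B U :: "'a::euclidean_space set" and h :: "'a \<Rightarrow> 'a" and d C :: real
  assumes "0 \<in> closure A" and "0 \<in> closure B"
    and "bilipschitz_homeo_germ h U"
    and "d > 1" and "C > 0"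
    and "\<exists>e>0. A \<inter> ball 0 e \<subseteq> sea_tangle d B C"
  shows "direction_set (h ` (A \<inter> U)) \<subseteq> direction_set (h ` (B \<inter> U)) \<and>
         (\<forall>C'>0. direction_set (sea_tangle d (h ` (A \<inter> U)) C') \<subseteq> direction_set (h ` (B \<inter> U)))"
proof -
  note U = bilipschitz_homeo_germD[OF assms(3)]
  obtain e where "e > 0" "A \<inter> ball 0 e \<subseteq> sea_tangle d B C"
    using assms(6) by blast
  moreover have "B \<noteq> {}"
    using assms(2) by auto
  ultimately have image: "direction_set (h ` (A \<inter> U)) \<subseteq> direction_set (h ` (B \<inter> U))"
    by (intro direction_set_bilipschitz_image_subset[OF assms(3) _ \<open>d > 1\<close>])
  have "A \<inter> U \<noteq> {}"
    using assms(1) U(1,2) open_Int_closure_eq_empty[of U A] by blast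
  then have "h ` (A \<inter> U) \<noteq> {}"
    by simp
  then have "direction_set (sea_tangle d (h ` (A \<inter> U)) C') \<subseteq> direction_set (h ` (A \<inter> U))" for C'
    by (rule direction_set_sea_tangle_subset[OF _ \<open>d > 1\<close>])
  with image show ?thesis
    by blast
qed

end
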